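(* Let $\{l,f_1,\dots,f_M\}$ be a set of generators of $H_2(\mathbb{CP}^2\# M\overline{\mathbb{CP}}^2;\mathbb Z)$, pairwise orthogonal for the intersection form, with $l$ the class of a complex line in $\mathbb{CP}^2$ and $f_i\cdot f_i=-1$. Let $\alpha_1,\dots,\alpha_k$, $k\ge2$, be classes of the form $\alpha_1=l-e^1_1-e^1_2-\dots-e^1_{b_1}$ and $\alpha_i=e^i_1-e^i_2-\dots-e^i_{b_i}$ for $i=2,\dots,k$, where $b_i\ge1$, each $e^i_j\in\{f_1,\dots,f_M\}$, and $e^i_j\ne e^i_{j'}$ for $j\ne j'$. Suppose $\alpha_i\cdot\alpha_j=1$ if $|i-j|=1$ and $\alpha_i\cdot\alpha_j=0$ if $|i-j|>1$. Let $A^1=\{e^1_1,\dots,e^1_{b_1}\}$ and $A^i=\{e^i_2,\dots,e^i_{b_i}\}$ for $i=2,\dots,k$. Then: (1) for every $j=2,\dots,k$ there is an index $i$ with $1\le i<j$ such that $e^j_1\in A^i$; moreover, if $e^j_1\in A^i$ with $i<j-1$, then $e^h_1\in A^i\cap A^j$ for some index $h$ with $i<h<j$; (2) for every $1\le i<j\le k$, $A^i\cap A^j\subseteq\{e^2_1,\dots,e^k_1\}$. *)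

theory Defs
  imports Main
begin

text \<open>H_2(CP^2 # M \<bar>CP^2\<bar>; Z) is identified with Z^(M+1) via the orthogonal basis
  l, f_1, ..., f_M: a class is its coefficient vector c :: nat \<Rightarrow> int, where
  c 0 is the coefficient of l and c m (1 \<le> m \<le> M) that of f_m.\<close>

definition cls_l :: "nat \<Rightarrow> int" where
  "cls_l = (\<lambda>m. if m = 0 then 1 else 0)"

definition cls_f :: "nat \<Rightarrow> nat \<Rightarrow> int" where
  "cls_f a = (\<lambda>m. if m = a then 1 else 0)"

definition iform :: "nat \<Rightarrow> (nat \<Rightarrow> int) \<Rightarrow> (nat \<Rightarrow> int) \<Rightarrow> int" where
  "iform M x y = x 0 * y 0 - (\<Sum>m = 1..M. x m * y m)"

text \<open>e i j is the index m with e^i_j = f_m.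
  alpha_1 = l - e^1_1 - ... - e^1_{b_1};  alpha_i = e^i_1 - e^i_2 - ... - e^i_{b_i}.\<close>
definition alpha :: "(nat \<Rightarrow> nat \<Rightarrow> nat) \<Rightarrow> (nat \<Rightarrow> nat) \<Rightarrow> nat \<Rightarrow> nat \<Rightarrow> int" where
  "alpha e b i = (\<lambda>m.
     (if i = 1 then cls_l m - (\<Sum>j = 1..b 1. cls_f (e 1 j) m)
      else cls_f (e i 1) m - (\<Sum>j = 2..b i. cls_f (e i j) m)))"

definition Aset :: "(nat \<Rightarrow> nat \<Rightarrow> nat) \<Rightarrow> (nat \<Rightarrow> nat) \<Rightarrow> nat \<Rightarrow> nat set" where
  "Aset e b i = (if i = 1 then e 1 ` {1..b 1} else e i ` {2..b i})"

end

theory Submission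
  imports Defs "HOL-Library.Function_Algebras" "HOL-Library.Indicator_Function"
begin

(* Let gamma_j = alpha_1 + ... + alpha_j. As alpha_(j+1) meets alpha_j once and is orthogonal
   to the earlier alpha_i, gamma_j . alpha_(j+1) = 1. By induction gamma_j = l - (sum of f_m over
   m in G_j): writing alpha_(j+1) = e^(j+1)_1 - (sum over A^(j+1)), the product equals
   [e^(j+1)_1 in G_j] - |A^(j+1) inter G_j|, and its being 1 forces e^(j+1)_1 in G_j and
   A^(j+1) inter G_j = {}, so G_(j+1) = (G_j - {e^(j+1)_1}) union A^(j+1). Hence an element of
   A^i, once in G, can leave it only at a later step h as e^h_1, while A^j is disjoint from
   G_(j-1); this gives (2) and the first half of (1). For the second half, alpha_i . alpha_j = 0
   together with e^j_1 in A^i forces A^i and A^j to meet. *)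

lemma cls_l_eq_indicator: "cls_l = indicator {0}"
  by (auto simp: cls_l_def indicator_def)

lemma cls_f_eq_indicator: "cls_f a = indicator {a}"
  by (auto simp: cls_f_def indicator_def)

lemma sum_indicator_singleton: "finite X \<Longrightarrow> (\<Sum>a\<in>X. indicator {a} m) = indicator X m"
  by (induction rule: finite_induct) (auto simp: indicator_def)

lemma sum_cls_f_inj_on:
  "inj_on f S \<Longrightarrow> finite S \<Longrightarrow> (\<Sum>t\<in>S. cls_f (f t) m) = indicator (f ` S) m"
  using sum.reindex[of f S "\<lambda>a. indicator {a} m :: int"]
  by (simp add: cls_f_eq_indicator sum_indicator_singleton)

lemma alpha_one_eq:
  assumes "inj_on (e 1) {1..b 1}"
  shows "alpha e b 1 = indicator {0} - indicator (Aset e b 1)"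
proof
  fix m
  have "alpha e b 1 m = cls_l m - (\<Sum>j=1..b 1. cls_f (e 1 j) m)"
    by (simp add: alpha_def)
  also have "\<dots> = indicator {0} m - indicator (Aset e b 1) m"
    using sum_cls_f_inj_on[OF assms finite_atLeastAtMost]
    by (simp add: cls_l_eq_indicator Aset_def)
  finally show "alpha e b 1 m = (indicator {0} - indicator (Aset e b 1)) m"
    by simp
qed

lemma alpha_eq_of_ne_one:
  assumes "i \<noteq> 1" "inj_on (e i) {2..b i}"
  shows "alpha e b i = indicator {e i 1} - indicator (Aset e b i)"
proof
  fix m
  have "alpha e b i m = cls_f (e i 1) m - (\<Sum>j=2..b i. cls_f (e i j) m)"
    using assms(1) by (simp add: alpha_def)
  also have "\<dots> = indicator {e i 1} m - indicator (Aset e b i) m"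
    using sum_cls_f_inj_on[OF assms(2) finite_atLeastAtMost] assms(1)
    by (simp add: cls_f_eq_indicator Aset_def)
  finally show "alpha e b i m = (indicator {e i 1} - indicator (Aset e b i)) m"
    by simp
qed

lemma iform_indicator:
  "iform M (indicator S) (indicator T)
     = of_bool (0 \<in> S \<inter> T) - int (card ({1..M} \<inter> (S \<inter> T)))"
  by (simp add: iform_def indicator_inter_arith[symmetric] sum_indicator_eq_card)
    (auto simp: indicator_def Int_def)

lemma iform_diff_left: "iform M (x - y) z = iform M x z - iform M y z"
  by (simp add: iform_def sum_subtractf algebra_simps)

lemma iform_diff_right: "iform M x (y - z) = iform M x y - iform M x z"
  by (simp add: iform_def sum_subtractf algebra_simps)

lemma iform_sum_right: "iform M x (\<Sum>i\<in>I. y i) = (\<Sum>i\<in>I. iform M x (y i))"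
  by (induction I rule: infinite_finite_induct)
    (simp_all add: iform_def sum.distrib algebra_simps)

lemma iform_point_class_line_class:
  assumes "x \<in> {1..M}" "A \<subseteq> {1..M}"
  shows "iform M (indicator {x} - indicator A) (indicator {0} - indicator G)
           = of_bool (x \<in> G) - int (card (A \<inter> G))"
proof -
  have "0 \<notin> A" "{1..M} \<inter> (A \<inter> G) = A \<inter> G" using assms(2) by auto
  then show ?thesis
    using assms(1) by (simp add: iform_diff_left iform_diff_right iform_indicator)
qed

lemma iform_point_classes_pos:
  assumes "x \<in> P" "p \<notin> P" "x \<in> {1..M}" "Q \<subseteq> {1..M}" "P \<inter> Q = {}"
  shows "iform M (indicator {p} - indicator P) (indicator {x} - indicator Q) > 0"
proof -
  have "0 \<notin> Q" "p \<noteq> x" "x \<noteq> 0" "{1..M} \<inter> (P \<inter> {x}) = {x}" using assms by auto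
  with assms(5) show ?thesis by (simp add: iform_diff_left iform_diff_right iform_indicator)
qed

(* With A i = A^i and x i = e^i_1, chain_support A x j is the set G_j for which
   alpha_1 + ... + alpha_j = l - (sum of f_m over m in G_j). *)
primrec chain_support :: "(nat \<Rightarrow> 'a set) \<Rightarrow> (nat \<Rightarrow> 'a) \<Rightarrow> nat \<Rightarrow> 'a set" where
  "chain_support A x 0 = {}"
| "chain_support A x (Suc j) = (chain_support A x j - {x (Suc j)}) \<union> A (Suc j)"

lemma chain_support_subset: "chain_support A x j \<subseteq> (\<Union>i\<in>{1..j}. A i)"
  by (induction j) (auto simp: atLeastAtMostSuc_conv)

lemma not_in_chain_support:
  assumes "m \<in> A i" "1 \<le> i" "i \<le> j" "m \<notin> chain_support A x j"
  shows "\<exists>h. i < h \<and> h \<le> j \<and> m = x h"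
  using assms
proof (induction j)
  case (Suc j)
  have "i \<le> j"
    using Suc.prems by (cases "i = Suc j") auto
  show ?case
  proof (cases "m = x (Suc j)")
    case True
    with \<open>i \<le> j\<close> show ?thesis by (intro exI[of _ "Suc j"]) auto
  next
    case False
    with Suc.prems have "m \<notin> chain_support A x j" by simp
    with Suc.IH Suc.prems \<open>i \<le> j\<close> show ?thesis by (meson le_SucI)
  qed
qed simp

locale linear_chain =
  fixes M k :: nat and b :: "nat \<Rightarrow> nat" and e :: "nat \<Rightarrow> nat \<Rightarrow> nat"
  assumes b_pos: "\<forall>i\<in>{1..k}. b i \<ge> 1"
    and e_range: "\<forall>i\<in>{1..k}. \<forall>j\<in>{1..b i}. e i j \<in> {1..M}"
    and e_inj: "\<forall>i\<in>{1..k}. inj_on (e i) {1..b i}"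
    and adj: "\<forall>i\<in>{1..k}. \<forall>j\<in>{1..k}. (i + 1 = j \<or> j + 1 = i) \<longrightarrow>
                 iform M (alpha e b i) (alpha e b j) = 1"
    and nonadj: "\<forall>i\<in>{1..k}. \<forall>j\<in>{1..k}. (i + 1 < j \<or> j + 1 < i) \<longrightarrow>
                 iform M (alpha e b i) (alpha e b j) = 0"
begin

abbreviation A :: "nat \<Rightarrow> nat set" where
  "A \<equiv> Aset e b"

abbreviation supp :: "nat \<Rightarrow> nat set" where
  "supp \<equiv> chain_support A (\<lambda>i. e i 1)"

definition lead :: "nat \<Rightarrow> nat" where
  "lead i = (if i = 1 then 0 else e i 1)"

lemma A_subset: "i \<in> {1..k} \<Longrightarrow> A i \<subseteq> {1..M}"
  using e_range by (auto simp: Aset_def)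

lemma e_first_mem: "i \<in> {1..k} \<Longrightarrow> e i 1 \<in> {1..M}"
  using e_range b_pos by auto

lemma lead_notin_A:
  assumes i: "i \<in> {1..k}"
  shows "lead i \<notin> A i"
proof (cases "i = 1")
  case True
  with A_subset[OF i] show ?thesis by (auto simp: lead_def)
next
  case False
  have "inj_on (e i) {1..b i}" "1 \<in> {1..b i}"
    using i e_inj b_pos by auto
  with False show ?thesis
    by (simp add: lead_def Aset_def inj_on_image_mem_iff)
qed

lemma lead_one: "lead 1 = 0"
  by (simp add: lead_def)

lemma alpha_eq:
  assumes i: "i \<in> {1..k}"
  shows "alpha e b i = indicator {lead i} - indicator (A i)"
proof (cases "i = 1")
  case True
  with i e_inj have "inj_on (e 1) {1..b 1}" by blast
  then have "alpha e b 1 = indicator {lead 1} - indicator (A 1)"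
    unfolding lead_one by (rule alpha_one_eq)
  with True show ?thesis by (simp only:)
next
  case False
  from i e_inj have "inj_on (e i) {1..b i}" by blast
  then have "inj_on (e i) {2..b i}" by (rule inj_on_subset) auto
  from alpha_eq_of_ne_one[of i e b, OF False this] False show ?thesis by (simp add: lead_def)
qed

lemma iform_next_partial_sum:
  assumes "1 \<le> j" "j < k"
  shows "iform M (alpha e b (Suc j)) (\<Sum>i=1..j. alpha e b i) = 1"
proof -
  have "iform M (alpha e b (Suc j)) (alpha e b i) = (if i = j then 1 else 0)"
    if "i \<in> {1..j}" for i
    using that assms adj nonadj by auto
  then have "iform M (alpha e b (Suc j)) (\<Sum>i=1..j. alpha e b i)
               = (\<Sum>i=1..j. if i = j then 1 else 0)"
    by (simp add: iform_sum_right)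
  with assms show ?thesis by simp
qed

lemma supp_step_of_partial_sum:
  assumes j: "1 \<le> j" "j < k"
    and sum_j: "(\<Sum>i=1..j. alpha e b i) = indicator {0} - indicator (supp j)"
  shows "e (Suc j) 1 \<in> supp j" "A (Suc j) \<inter> supp j = {}"
proof -
  have Suc_j: "Suc j \<in> {1..k}" "Suc j \<noteq> 1" using j by auto
  have alpha_Suc_j: "alpha e b (Suc j) = indicator {e (Suc j) 1} - indicator (A (Suc j))"
    using alpha_eq[OF Suc_j(1)] Suc_j(2) by (simp add: lead_def)
  have "1 = iform M (indicator {e (Suc j) 1} - indicator (A (Suc j)))
                     (indicator {0} - indicator (supp j))"
    using iform_next_partial_sum[OF j] by (simp only: alpha_Suc_j sum_j)
  also have "\<dots> = of_bool (e (Suc j) 1 \<in> supp j) - int (card (A (Suc j) \<inter> supp j))"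
    using Suc_j(1) by (intro iform_point_class_line_class e_first_mem A_subset)
  finally have "e (Suc j) 1 \<in> supp j" "card (A (Suc j) \<inter> supp j) = 0"
    by (auto simp: of_bool_def split: if_splits)
  moreover have "finite (A (Suc j))" by (simp add: Aset_def)
  ultimately show "e (Suc j) 1 \<in> supp j" "A (Suc j) \<inter> supp j = {}"
    by auto
qed

lemma partial_sum_eq:
  "1 \<le> j \<Longrightarrow> j \<le> k \<Longrightarrow> (\<Sum>i=1..j. alpha e b i) = indicator {0} - indicator (supp j)"
proof (induction j)
  case (Suc j)
  show ?case
  proof (cases "j = 0")
    case True
    with Suc.prems alpha_eq[of 1] show ?thesis by (simp add: lead_def)
  next
    case False
    then have j: "1 \<le> j" "j < k" and Suc_j: "Suc j \<in> {1..k}" "Suc j \<noteq> 1"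
      using Suc.prems by auto
    have sum_j: "(\<Sum>i=1..j. alpha e b i) = indicator {0} - indicator (supp j)"
      using Suc.IH[OF j(1) less_imp_le[OF j(2)]] .
    have "e (Suc j) 1 \<in> supp j" "A (Suc j) \<inter> supp j = {}" "e (Suc j) 1 \<notin> A (Suc j)"
      using supp_step_of_partial_sum[OF j sum_j] lead_notin_A[OF Suc_j(1)] Suc_j(2)
      by (simp_all add: lead_def)
    then show ?thesis
      using sum_j alpha_eq[OF Suc_j(1)] Suc_j(2)
      by (auto simp: lead_def fun_eq_iff indicator_def)
  qed
qed simp

lemma supp_step:
  assumes "j \<in> {2..k}"
  shows "e j 1 \<in> supp (j - 1)" "A j \<inter> supp (j - 1) = {}"
proof -
  from assms obtain j' where j': "j = Suc j'" "1 \<le> j'" "j' < k"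
    by (cases j) auto
  with supp_step_of_partial_sum[OF j'(2,3) partial_sum_eq]
  show "e j 1 \<in> supp (j - 1)" "A j \<inter> supp (j - 1) = {}"
    by simp_all
qed

lemma A_inter_A_between:
  assumes "1 \<le> i" "i < j" "j \<le> k" "m \<in> A i" "m \<in> A j"
  shows "\<exists>h. i < h \<and> h < j \<and> m = e h 1"
proof -
  have "m \<notin> supp (j - 1)"
    using supp_step(2)[of j] assms by auto
  with assms show ?thesis
    using not_in_chain_support[of m A i "j - 1"] by fastforce
qed

lemma e_first_in_earlier_A:
  assumes "j \<in> {2..k}"
  shows "\<exists>i. 1 \<le> i \<and> i < j \<and> e j 1 \<in> A i"
  using supp_step(1)[OF assms] chain_support_subset[of A _ "j - 1"] assms by fastforce

lemma A_inter_A_nonempty: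
  assumes "1 \<le> i" "i + 1 < j" "j \<le> k" "e j 1 \<in> A i"
  shows "A i \<inter> A j \<noteq> {}"
proof
  assume disjoint: "A i \<inter> A j = {}"
  have i: "i \<in> {1..k}" and j: "j \<in> {1..k}" "j \<noteq> 1" using assms by auto
  have "iform M (indicator {lead i} - indicator (A i))
               (indicator {e j 1} - indicator (A j)) > 0"
    using assms(4) lead_notin_A[OF i] e_first_mem[OF j(1)] A_subset[OF j(1)] disjoint
    by (rule iform_point_classes_pos)
  moreover have "iform M (alpha e b i) (alpha e b j) = 0"
    using nonadj i j assms(2) by auto
  ultimately show False
    using alpha_eq[OF i] alpha_eq[OF j(1)] j(2) by (simp add: lead_def)
qed

end

theorem lemma4p3:
  fixes M k :: nat and b :: "nat \<Rightarrow> nat" and e :: "nat \<Rightarrow> nat \<Rightarrow> nat"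
  assumes k2: "k \<ge> 2"
    and b_pos: "\<forall>i\<in>{1..k}. b i \<ge> 1"
    and e_range: "\<forall>i\<in>{1..k}. \<forall>j\<in>{1..b i}. e i j \<in> {1..M}"
    and e_inj: "\<forall>i\<in>{1..k}. inj_on (e i) {1..b i}"
    and adj: "\<forall>i\<in>{1..k}. \<forall>j\<in>{1..k}. (i + 1 = j \<or> j + 1 = i) \<longrightarrow>
                 iform M (alpha e b i) (alpha e b j) = 1"
    and nonadj: "\<forall>i\<in>{1..k}. \<forall>j\<in>{1..k}. (i + 1 < j \<or> j + 1 < i) \<longrightarrow>
                 iform M (alpha e b i) (alpha e b j) = 0"
  shows "(\<forall>j\<in>{2..k}. (\<exists>i. 1 \<le> i \<and> i < j \<and> e j 1 \<in> Aset e b i) \<and>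
            (\<forall>i. 1 \<le> i \<and> i + 1 < j \<and> e j 1 \<in> Aset e b i \<longrightarrow>
               (\<exists>h. i < h \<and> h < j \<and> e h 1 \<in> Aset e b i \<inter> Aset e b j)))
       \<and> (\<forall>i j. 1 \<le> i \<and> i < j \<and> j \<le> k \<longrightarrow>
            Aset e b i \<inter> Aset e b j \<subseteq> {e h 1 | h. 2 \<le> h \<and> h \<le> k})"
proof -
  interpret linear_chain M k b e
    using b_pos e_range e_inj adj nonadj by unfold_locales
  have between: "\<exists>h. i < h \<and> h < j \<and> e h 1 \<in> Aset e b i \<inter> Aset e b j"
    if ij: "1 \<le> i" "i + 1 < j" "j \<le> k" "e j 1 \<in> Aset e b i" for i j
  proof -
    obtain m where "m \<in> Aset e b i" "m \<in> Aset e b j"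
      using A_inter_A_nonempty[OF ij] by blast
    with ij show ?thesis
      using A_inter_A_between[of i j m] by fastforce
  qed
  have "Aset e b i \<inter> Aset e b j \<subseteq> {e h 1 | h. 2 \<le> h \<and> h \<le> k}"
    if "1 \<le> i" "i < j" "j \<le> k" for i j
    using that A_inter_A_between[of i j] by fastforce
  with between e_first_in_earlier_A show ?thesis by auto
qed

end
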